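(* Let $(a_k)_{k\ge1},(c_k)_{k\ge1}$ be real sequences with $\sum_{k\ge1}(a_k^2+c_k^2)<\infty$. Then $$\begin{aligned}F(a,c):=\sum_{k\ge1}\Big\{&a_k^2\Big(0.84+\frac1{k^2}-\frac1{(k-1)^2}\Big)+c_k^2\Big(0.84+\frac1{k(k+1)}\Big)+\frac{2a_ka_{k+1}}{(k+1)^2}+2a_k\sum_{j>k+1}a_j\Big(\frac1{j^2}-\frac1{(j-1)^2}\Big)\\&+2a_kc_k\frac{1+2k-k^2}{2k^2(k+1)}+2a_{k+1}c_k\frac{k^2-k-1}{2k^2(k+1)^2}-2a_{k+2}c_k\frac{k+2}{2(k+1)^2}+\sum_{j>k}\frac{2a_kc_j}{j(j+1)}\Big\}\ge0.\end{aligned}$$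
   Context: For $k=1$ the term $\frac{1}{(k-1)^2}$ is interpreted as $0$. *)

theory Defs
  imports Complex_Main
begin

text \<open>Sequences are functions nat => real; only indices k >= 1 are used.
  For k = 1 the term 1/(k-1)^2 is 1/0 = 0 in Isabelle, matching the convention.\<close>

definition tailA :: "(nat \<Rightarrow> real) \<Rightarrow> nat \<Rightarrow> real" where
  "tailA a k = (\<Sum>i. a (i + k + 2) * (1 / (real (i + k + 2))^2 - 1 / (real (i + k + 2) - 1)^2))"

definition tailC :: "(nat \<Rightarrow> real) \<Rightarrow> nat \<Rightarrow> real" where
  "tailC c k = (\<Sum>i. c (i + k + 1) / (real (i + k + 1) * (real (i + k + 1) + 1)))"

definition Fterm :: "(nat \<Rightarrow> real) \<Rightarrow> (nat \<Rightarrow> real) \<Rightarrow> nat \<Rightarrow> real" where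
  "Fterm a c k =
     (a k)^2 * (0.84 + 1 / (real k)^2 - 1 / (real k - 1)^2)
   + (c k)^2 * (0.84 + 1 / (real k * (real k + 1)))
   + 2 * a k * a (k + 1) / (real k + 1)^2
   + 2 * a k * tailA a k
   + 2 * a k * c k * ((1 + 2 * real k - (real k)^2) / (2 * (real k)^2 * (real k + 1)))
   + 2 * a (k + 1) * c k * (((real k)^2 - real k - 1) / (2 * (real k)^2 * (real k + 1)^2))
   - 2 * a (k + 2) * c k * ((real k + 2) / (2 * (real k + 1)^2))
   + 2 * a k * tailC c k"

end

theory Submission
  imports Defs "HOL-Computational_Algebra.Polynomial" "HOL-Analysis.Summation_Tests"
    "HOL-Real_Asymp.Real_Asymp"
begin

text \<open>Let \<open>R k = tailA a k + tailC c k\<close>. The \<open>k\<close>-th summand \<open>F k\<close> is a quadratic form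
  in \<open>(a k, c k, a (k+1), a (k+2), R k)\<close>, and
  \<open>R (k-1) = R k + c k / (k (k+1)) + a (k+1) (1/(k+1)^2 - 1/k^2)\<close>.
  We choose ternary quadratic forms \<open>\<Phi> j\<close> (\<open>lower_form\<close>) with \<open>\<Phi> 0 = 0\<close> and
  \<open>F k \<ge> \<Phi> k (a (k+1), a (k+2), R k) - \<Phi> (k-1) (a k, a (k+1), R (k-1))\<close> for all \<open>k \<ge> 1\<close>.
  After substituting the recursion for \<open>R (k-1)\<close>, each of these inequalities says that a quadratic
  form in five variables is positive semidefinite: for \<open>k \<le> 8\<close> this is certified by an exact
  \<open>LDL\<^sup>T\<close> factorisation, for \<open>k \<ge> 9\<close>, where \<open>\<Phi> k\<close> is diagonal with entries of order
  \<open>1/k\<close>, \<open>1/k\<close> and \<open>k\<close>, by diagonal dominance. Telescoping gives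
  \<open>F 1 + \<dots> + F N \<ge> \<Phi> N (a (N+1), a (N+2), R N)\<close>, and the right-hand side tends to \<open>0\<close>
  because \<open>R N = O(1/N)\<close>.\<close>

definition qform3 :: "real \<Rightarrow> real \<Rightarrow> real \<Rightarrow> real \<Rightarrow> real \<Rightarrow> real \<Rightarrow> real \<Rightarrow> real \<Rightarrow> real \<Rightarrow> real" where
  "qform3 p00 p11 p22 p01 p02 p12 x y z =
     p00*x^2 + p11*y^2 + p22*z^2 + 2*p01*x*y + 2*p02*x*z + 2*p12*y*z"

definition qform5 :: "real \<Rightarrow> real \<Rightarrow> real \<Rightarrow> real \<Rightarrow> real \<Rightarrow> real \<Rightarrow> real \<Rightarrow> real \<Rightarrow> real \<Rightarrow> real
    \<Rightarrow> real \<Rightarrow> real \<Rightarrow> real \<Rightarrow> real \<Rightarrow> real \<Rightarrow> real \<Rightarrow> real \<Rightarrow> real \<Rightarrow> real \<Rightarrow> real \<Rightarrow> real" where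
  "qform5 m00 m11 m22 m33 m44 m01 m02 m03 m04 m12 m13 m14 m23 m24 m34 x0 x1 x2 x3 x4 =
     m00*x0^2 + m11*x1^2 + m22*x2^2 + m33*x3^2 + m44*x4^2
     + 2*m01*x0*x1 + 2*m02*x0*x2 + 2*m03*x0*x3 + 2*m04*x0*x4
     + 2*m12*x1*x2 + 2*m13*x1*x3 + 2*m14*x1*x4
     + 2*m23*x2*x3 + 2*m24*x2*x4 + 2*m34*x3*x4"

lemma qform5_nonneg_of_LDL:
  assumes "m00 = dA" "m01 = dA*lAB" "m02 = dA*lAC" "m03 = dA*lAD" "m04 = dA*lAE"
    "m11 = dA*lAB^2 + dB" "m12 = dA*lAB*lAC + dB*lBC" "m13 = dA*lAB*lAD + dB*lBD"
    "m14 = dA*lAB*lAE + dB*lBE"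
    "m22 = dA*lAC^2 + dB*lBC^2 + dC" "m23 = dA*lAC*lAD + dB*lBC*lBD + dC*lCD"
    "m24 = dA*lAC*lAE + dB*lBC*lBE + dC*lCE"
    "m33 = dA*lAD^2 + dB*lBD^2 + dC*lCD^2 + dD"
    "m34 = dA*lAD*lAE + dB*lBD*lBE + dC*lCD*lCE + dD*lDE"
    "m44 = dA*lAE^2 + dB*lBE^2 + dC*lCE^2 + dD*lDE^2 + dE"
    and "0 \<le> dA" "0 \<le> dB" "0 \<le> dC" "0 \<le> dD" "0 \<le> dE"
  shows "0 \<le> qform5 m00 m11 m22 m33 m44 m01 m02 m03 m04 m12 m13 m14 m23 m24 m34 x0 x1 x2 x3 x4"
proof -
  have "qform5 m00 m11 m22 m33 m44 m01 m02 m03 m04 m12 m13 m14 m23 m24 m34 x0 x1 x2 x3 x4 =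
     dA*(x0 + lAB*x1 + lAC*x2 + lAD*x3 + lAE*x4)^2 + dB*(x1 + lBC*x2 + lBD*x3 + lBE*x4)^2
     + dC*(x2 + lCD*x3 + lCE*x4)^2 + dD*(x3 + lDE*x4)^2 + dE*x4^2"
    unfolding qform5_def assms(1-15) by (simp add: power2_eq_square algebra_simps)
  also have "0 \<le> \<dots>"
    using assms(16-20) by (intro add_nonneg_nonneg mult_nonneg_nonneg) simp_all
  finally show ?thesis .
qed

lemma abs_two_mult_le_weighted:
  fixes m x y s :: real
  assumes "0 < s"
  shows "\<bar>2*m*x*y\<bar> \<le> \<bar>m\<bar> * (s*x^2 + y^2/s)"
proof -
  have "2 * (sqrt s * \<bar>x\<bar>) * (\<bar>y\<bar> / sqrt s) \<le> (sqrt s * \<bar>x\<bar>)^2 + (\<bar>y\<bar> / sqrt s)^2"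
    by (rule sum_squares_bound)
  then have "\<bar>2*x*y\<bar> \<le> s*x^2 + y^2/s"
    using assms by (simp add: abs_mult power_mult_distrib power_divide)
  then have "\<bar>m\<bar> * \<bar>2*x*y\<bar> \<le> \<bar>m\<bar> * (s*x^2 + y^2/s)"
    by (rule mult_left_mono) simp
  then show ?thesis
    by (simp add: abs_mult mult.left_commute)
qed

lemma abs_two_mult_le:
  fixes m x y :: real
  shows "\<bar>2*m*x*y\<bar> \<le> \<bar>m\<bar> * (x^2 + y^2)"
  using abs_two_mult_le_weighted[of 1 m x y] by simp

text \<open>Diagonal dominance of the form obtained by substituting \<open>x4 = s * y4\<close>.\<close>

lemma qform5_nonneg_of_diag_dominant:
  assumes s: "0 < s"
    and "\<bar>m01\<bar> + \<bar>m02\<bar> + \<bar>m03\<bar> + s*\<bar>m04\<bar> \<le> m00"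
    and "\<bar>m01\<bar> + \<bar>m12\<bar> + \<bar>m13\<bar> + s*\<bar>m14\<bar> \<le> m11"
    and "\<bar>m02\<bar> + \<bar>m12\<bar> + \<bar>m23\<bar> + s*\<bar>m24\<bar> \<le> m22"
    and "\<bar>m03\<bar> + \<bar>m13\<bar> + \<bar>m23\<bar> + s*\<bar>m34\<bar> \<le> m33"
    and "\<bar>m04\<bar> + \<bar>m14\<bar> + \<bar>m24\<bar> + \<bar>m34\<bar> \<le> s*m44"
  shows "0 \<le> qform5 m00 m11 m22 m33 m44 m01 m02 m03 m04 m12 m13 m14 m23 m24 m34 x0 x1 x2 x3 x4"
proof -
  have "(\<bar>m04\<bar> + \<bar>m14\<bar> + \<bar>m24\<bar> + \<bar>m34\<bar>) / s \<le> m44"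
    using assms(6) s by (simp add: divide_le_eq mult.commute)
  then have row4: "(\<bar>m04\<bar> + \<bar>m14\<bar> + \<bar>m24\<bar> + \<bar>m34\<bar>) / s * x4^2 \<le> m44 * x4^2"
    by (rule mult_right_mono) simp
  have rows: "(\<bar>m01\<bar> + \<bar>m02\<bar> + \<bar>m03\<bar> + s*\<bar>m04\<bar>) * x0^2 \<le> m00 * x0^2"
    "(\<bar>m01\<bar> + \<bar>m12\<bar> + \<bar>m13\<bar> + s*\<bar>m14\<bar>) * x1^2 \<le> m11 * x1^2"
    "(\<bar>m02\<bar> + \<bar>m12\<bar> + \<bar>m23\<bar> + s*\<bar>m24\<bar>) * x2^2 \<le> m22 * x2^2"
    "(\<bar>m03\<bar> + \<bar>m13\<bar> + \<bar>m23\<bar> + s*\<bar>m34\<bar>) * x3^2 \<le> m33 * x3^2"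
    using assms(2-5) by (simp_all add: mult_right_mono)
  have cross: "- (\<bar>m\<bar> * (x^2 + y^2)) \<le> 2*m*x*y" for m x y :: real
    using abs_two_mult_le[of m x y] by linarith
  have cross_weighted: "- (\<bar>m\<bar> * (s*x^2 + y^2/s)) \<le> 2*m*x*y" for m x y :: real
    using abs_two_mult_le_weighted[OF s, of m x y] by linarith
  show ?thesis
    using rows row4 cross[of m01 x0 x1] cross[of m02 x0 x2] cross[of m03 x0 x3]
      cross[of m12 x1 x2] cross[of m13 x1 x3] cross[of m23 x2 x3]
      cross_weighted[of m04 x0 x4] cross_weighted[of m14 x1 x4]
      cross_weighted[of m24 x2 x4] cross_weighted[of m34 x3 x4]
    unfolding qform5_def by (simp add: algebra_simps add_divide_distrib)
qed

lemma poly_nonneg_of_coeffs_nonneg: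
  fixes p :: "'a::linordered_idom poly"
  assumes "\<forall>i. 0 \<le> coeff p i" "0 \<le> x"
  shows "0 \<le> poly p x"
  unfolding poly_altdef using assms by (intro sum_nonneg mult_nonneg_nonneg zero_le_power) auto

lemma le_of_poly_certificate:
  fixes x y t D :: real
  assumes "y - x = poly p t / D" "\<forall>i. 0 \<le> coeff p i" "0 \<le> t" "0 < D"
  shows "x \<le> y"
proof -
  have "0 \<le> poly p t / D"
    using assms poly_nonneg_of_coeffs_nonneg[of p t] by simp
  then show ?thesis
    using assms(1) by linarith
qed

lemma telescoping_inverse_power_sums:
  assumes "0 < p"
  shows "(\<lambda>i. 1 / real (i + m + 1)^p - 1 / real (i + m + 2)^p) sums (1 / real (m + 1)^p)"
proof -
  have "(\<lambda>i. 1 / real (i + (m + 1))) \<longlonglongrightarrow> 0"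
    using LIMSEQ_ignore_initial_segment[OF lim_const_over_n[of 1], of "m + 1"] by simp
  then have "(\<lambda>i. (1 / real (i + (m + 1)))^p) \<longlonglongrightarrow> 0^p"
    by (rule tendsto_power)
  then have "(\<lambda>i. 1 / real (i + (m + 1))^p) \<longlonglongrightarrow> 0"
    using assms by (simp add: power_one_over zero_power)
  from telescope_sums'[OF this] show ?thesis
    by (simp add: add.assoc)
qed

lemma summable_and_abs_suminf_le_of_dominated:
  fixes f g :: "nat \<Rightarrow> real"
  assumes "\<And>i. \<bar>f i\<bar> \<le> g i" "g sums s"
  shows "summable f" "\<bar>suminf f\<bar> \<le> s"
proof -
  have "summable g"
    using assms(2) by (rule sums_summable)
  moreover from this have "summable (\<lambda>i. \<bar>f i\<bar>)"
    by (rule summable_comparison_test') (use assms(1) in simp)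
  ultimately show "summable f"
    by (simp add: summable_rabs_cancel)
  have "\<bar>suminf f\<bar> \<le> (\<Sum>i. \<bar>f i\<bar>)"
    by (rule summable_rabs) fact
  also have "\<dots> \<le> suminf g"
    by (rule suminf_le) (use assms(1) \<open>summable g\<close> \<open>summable (\<lambda>i. \<bar>f i\<bar>)\<close> in auto)
  also have "\<dots> = s"
    using assms(2) by (rule sums_unique[symmetric])
  finally show "\<bar>suminf f\<bar> \<le> s" .
qed

definition summand_form :: "real \<Rightarrow> real \<Rightarrow> real \<Rightarrow> real \<Rightarrow> real \<Rightarrow> real
    \<Rightarrow> real \<Rightarrow> real \<Rightarrow> real \<Rightarrow> real \<Rightarrow> real \<Rightarrow> real" where
  "summand_form \<alpha> \<beta> \<gamma> p q r a0 c0 a1 a2 t =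
     \<alpha>*a0^2 + \<beta>*c0^2 + 2*\<gamma>*a0*a1 + 2*a0*t + 2*p*a0*c0 + 2*q*a1*c0 - 2*r*a2*c0"

definition coeff_a_a :: "real \<Rightarrow> real" where "coeff_a_a k = 0.84 + 1 / k^2 - 1 / (k - 1)^2"
definition coeff_c_c :: "real \<Rightarrow> real" where "coeff_c_c k = 0.84 + 1 / (k * (k + 1))"
definition coeff_a_a1 :: "real \<Rightarrow> real" where "coeff_a_a1 k = 1 / (k + 1)^2"
definition coeff_a_c :: "real \<Rightarrow> real" where "coeff_a_c k = (1 + 2*k - k^2) / (2 * k^2 * (k + 1))"
definition coeff_a1_c :: "real \<Rightarrow> real" where "coeff_a1_c k = (k^2 - k - 1) / (2 * k^2 * (k + 1)^2)"
definition coeff_a2_c :: "real \<Rightarrow> real" where "coeff_a2_c k = (k + 2) / (2 * (k + 1)^2)"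
definition weight_c :: "real \<Rightarrow> real" where "weight_c k = 1 / (k * (k + 1))"
definition weight_a :: "real \<Rightarrow> real" where "weight_a k = 1 / (k + 1)^2 - 1 / k^2"

lemmas coeff_defs = coeff_a_a_def coeff_c_c_def coeff_a_a1_def coeff_a_c_def coeff_a1_c_def
  coeff_a2_c_def weight_c_def weight_a_def

definition coeff_abs_sum :: "real \<Rightarrow> real" where
  "coeff_abs_sum k = 1 + \<bar>coeff_a_a k\<bar> + \<bar>coeff_c_c k\<bar> + \<bar>coeff_a_a1 k\<bar>
     + \<bar>coeff_a_c k\<bar> + \<bar>coeff_a1_c k\<bar> + \<bar>coeff_a2_c k\<bar>"

abbreviation summand_form_at :: "real \<Rightarrow> real \<Rightarrow> real \<Rightarrow> real \<Rightarrow> real \<Rightarrow> real \<Rightarrow> real" where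
  "summand_form_at k \<equiv> summand_form (coeff_a_a k) (coeff_c_c k) (coeff_a_a1 k)
     (coeff_a_c k) (coeff_a1_c k) (coeff_a2_c k)"

lemma step_form_eq:
  "summand_form \<alpha> \<beta> \<gamma> p q r a0 c0 a1 a2 t
     + qform3 P00 P11 P22 P01 P02 P12 a0 a1 (t + w*c0 + d*a1)
     - qform3 Q00 Q11 Q22 Q01 Q02 Q12 a1 a2 t =
   qform5 (\<alpha> + P00) (\<beta> + P22*w^2) (P11 + P22*d^2 + 2*P12*d - Q00) (-Q11) (P22 - Q22)
     (p + P02*w) (\<gamma> + P01 + P02*d) 0 (1 + P02)
     (q + P22*w*d + P12*w) (-r) (P22*w)
     (-Q01) (P22*d + P12 - Q02) (-Q12) a0 c0 a1 a2 t"
  unfolding summand_form_def qform3_def qform5_def by (simp add: power2_eq_square algebra_simps)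

lemma abs_summand_form_le:
  "\<bar>summand_form \<alpha> \<beta> \<gamma> p q r a0 c0 a1 a2 t\<bar>
     \<le> (1 + \<bar>\<alpha>\<bar> + \<bar>\<beta>\<bar> + \<bar>\<gamma>\<bar> + \<bar>p\<bar> + \<bar>q\<bar> + \<bar>r\<bar>) * (a0^2 + c0^2 + a1^2 + a2^2 + t^2)"
proof -
  define S where "S = a0^2 + c0^2 + a1^2 + a2^2 + t^2"
  have cross: "\<bar>2*m*x*y\<bar> \<le> \<bar>m\<bar> * S" if "x^2 + y^2 \<le> S" for m x y
    using abs_two_mult_le[of m x y] mult_left_mono[OF that abs_ge_zero[of m]] by linarith
  have square: "\<bar>m * x^2\<bar> \<le> \<bar>m\<bar> * S" if "x^2 \<le> S" for m x
    using mult_left_mono[OF that abs_ge_zero[of m]] by (simp add: abs_mult)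
  have "\<bar>\<alpha>*a0^2\<bar> \<le> \<bar>\<alpha>\<bar> * S" "\<bar>\<beta>*c0^2\<bar> \<le> \<bar>\<beta>\<bar> * S"
    "\<bar>2*\<gamma>*a0*a1\<bar> \<le> \<bar>\<gamma>\<bar> * S" "\<bar>2*1*a0*t\<bar> \<le> \<bar>1\<bar> * S" "\<bar>2*p*a0*c0\<bar> \<le> \<bar>p\<bar> * S"
    "\<bar>2*q*a1*c0\<bar> \<le> \<bar>q\<bar> * S" "\<bar>2*r*a2*c0\<bar> \<le> \<bar>r\<bar> * S"
    by (intro square cross; simp add: S_def)+
  moreover have "(1 + \<bar>\<alpha>\<bar> + \<bar>\<beta>\<bar> + \<bar>\<gamma>\<bar> + \<bar>p\<bar> + \<bar>q\<bar> + \<bar>r\<bar>) * S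
      = \<bar>1\<bar> * S + \<bar>\<alpha>\<bar> * S + \<bar>\<beta>\<bar> * S + \<bar>\<gamma>\<bar> * S + \<bar>p\<bar> * S + \<bar>q\<bar> * S + \<bar>r\<bar> * S"
    by (simp add: algebra_simps)
  ultimately show ?thesis
    unfolding summand_form_def S_def[symmetric] abs_le_iff by (elim conjE) linarith
qed

text \<open>The forms for \<open>j \<le> 7\<close> were found numerically; only the exact certificates below matter.\<close>

definition lower_form :: "nat \<Rightarrow> real \<Rightarrow> real \<Rightarrow> real \<Rightarrow> real" where
  "lower_form j = (if j = 0 then qform3 0 0 0 0 0 0
    else if j = 1 then qform3 (-(16223/250000)) (-(116797/1000000)) (-(302409/500000))
      (-(12017/200000)) (-(17941/100000)) (-(84627/1000000))
    else if j = 2 then qform3 (-(335161/1000000)) (-(50179/1000000)) (-(27663237/1000000))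
      (-(2461/500000)) (-(2493411/1000000)) (-(109561/1000000))
    else if j = 3 then qform3 (-(287843/1000000)) (-(42133/1000000)) (-(52168537/1000000))
      (31727/500000) (1645681/500000) (-(440309/500000))
    else if j = 4 then qform3 (-(15633/500000)) (-(493/25000)) (-(10685811/100000))
      (877/250000) (148973/1000000) (-(149389/250000))
    else if j = 5 then qform3 (-(23887/1000000)) (-(12573/1000000)) (-(124829153/1000000))
      (2309/500000) (207927/250000) (-(452391/1000000))
    else if j = 6 then qform3 (-(6821/500000)) (-(4211/500000)) (-(139717333/1000000))
      (2057/1000000) (124473/250000) (-(300193/1000000))
    else if j = 7 then qform3 (-(2319/250000)) (-(61/10000)) (-(74871567/500000))
      (1191/1000000) (76263/200000) (-(10531/50000))
    else qform3 (-2 / real j) (-3 / (5 * real j)) (-(15 * real j + 55)) 0 0 0)"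

lemma lower_form_large:
  "8 \<le> j \<Longrightarrow> lower_form j = qform3 (-2 / real j) (-3 / (5 * real j)) (-(15 * real j + 55)) 0 0 0"
  by (simp add: lower_form_def)

lemma lower_form_step_small:
  assumes "1 \<le> n" "n \<le> 8"
  shows "0 \<le> summand_form_at (real n) a0 c0 a1 a2 t
    + lower_form (n - 1) a0 a1 (t + weight_c (real n) * c0 + weight_a (real n) * a1)
    - lower_form n a1 a2 t"
proof -
  consider "n = 1" | "n = 2" | "n = 3" | "n = 4" | "n = 5" | "n = 6" | "n = 7" | "n = 8"
    using assms by linarith
  then show ?thesis
  proof cases
    case 1
    then show ?thesis
      by (simp add: lower_form_def step_form_eq)
        (rule qform5_nonneg_of_LDL[where
          dA = "46/25" and dB = "5539/4600" and dC = "15447/1384750000" and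
          dD = "708761/61788000000" and dE = "5554823/354380500000" and lAB = "25/92" and
          lAC = "25/184" and lAD = "0" and lAE = "25/46" and lBC = "-(1775/11078)" and
          lBD = "-(1725/5539)" and lBE = "-(1250/5539)" and lCD = "-(1685/61788)" and
          lCE = "995/30894" and lDE = "-(11074/708761)"]; simp add: coeff_defs power2_eq_square)
  next
    case 2
    then show ?thesis
      by (simp add: lower_form_def step_form_eq)
        (rule qform5_nonneg_of_LDL[where
          dA = "6277/250000" and dB = "74145433463/75324000000" and
          dC = "53407192307209/4003853407002000000" and
          dD = "1813495032400729/160221576921627000000" and
          dE = "16288725627434253/56671719762522781250" and lAB = "11765/25108" and
          lAC = "455665/150648" and lAD = "0" and lAE = "410295/12554" and
          lBC = "-(9852736013/444872600778)" and lBD = "-(50216000000/222436300389)" and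
          lBE = "-(36555609222/74145433463)" and lCD = "1494443263844/53407192307209" and
          lCE = "-(121184339706/4108245562093)" and
          lDE = "-(43356514339905/1813495032400729)"]; simp add: coeff_defs power2_eq_square)
  next
    case 3
    then show ?thesis
      by (simp add: lower_form_def step_form_eq)
        (rule qform5_nonneg_of_LDL[where
          dA = "3293551/9000000" and dB = "68721476835281/118567836000000" and
          dC = "31576392907962289/2473973166070116000000" and
          dD = "82635176710040839/7894098226990572250000" and
          dE = "22000075289943243519/41317588355020419500000" and
          lAB = "-(8480233/13174204)" and lAC = "25745109/52696816" and lAD = "0" and
          lAE = "-(13440699/3293551)" and lBC = "111632535771943/274885907341124" and
          lBD = "-(18526224375000/68721476835281)" and
          lBE = "-(387311104856628/68721476835281)" and
          lCD = "-(239850518296914/31576392907962289)" and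
          lCE = "-(1120683164677992/31576392907962289)" and
          lDE = "2094653241511367/165270353420081678"]; simp add: coeff_defs power2_eq_square)
  next
    case 4
    then show ?thesis
      by (simp add: lower_form_def step_form_eq)
        (rule qform5_nonneg_of_LDL[where
          dA = "4531913/9000000" and dB = "1324388509143323/1812765200000000" and
          dC = "52605697026650117/5297554036573292000000" and
          dD = "65036844409797069/6575712128331264625000" and
          dE = "4387261516681645553/4064802775612316812500" and
          lAB = "10873629/45319130" and lAC = "52917039/906382600" and lAD = "0" and
          lAE = "38622258/4531913" and lBC = "774232759913693/26487770182866460" and
          lBD = "-(217531824000000/1324388509143323)" and
          lBE = "-(6594972552133540/1324388509143323)" and
          lCD = "-(2233322370476336/52605697026650117)" and
          lCE = "658815037500884/52605697026650117" and
          lDE = "-(3965064128462219/130073688819594138)"]; simp add: coeff_defs power2_eq_square)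
  next
    case 5
    then show ?thesis
      by (simp add: lower_form_def step_form_eq)
        (rule qform5_nonneg_of_LDL[where
          dA = "393117/500000" and dB = "19718495414353/26207800000000" and
          dC = "3108211362957211/319439625712518600000" and
          dD = "4253710019351531741/419608533999223485000000" and
          dE = "334554615563229276349/265856876209470733812500" and
          lAB = "-(139003/2620780)" and lAC = "8839499/235870200" and lAD = "0" and
          lAE = "382991/262078" and lBC = "84287261987551/1774664587291770" and
          lBD = "-(22931825000000/177466458729177)" and
          lBE = "-(91753425569410/19718495414353)" and
          lCD = "-(725533791341974/15541056814786055)" and
          lCE = "-(776703016568844/15541056814786055)" and
          lDE = "-(53604685692380349/4253710019351531741)"]; simp add: coeff_defs power2_eq_square)
  next
    case 6
    then show ?thesis
      by (simp add: lower_form_def step_form_eq)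
        (rule qform5_nonneg_of_LDL[where
          dA = "7235017/9000000" and dB = "3370231414031341/4254189996000000" and
          dC = "204781271549454357067/20064672723435588643500000" and
          dD = "2019220076111904769239817/196671933196095964527146800000" and
          dE = "14200585252953759044444325651/10096100380559523846199085000000" and
          lAB = "-(1627438/50645119)" and lAC = "8333487/354515833" and lAD = "0" and
          lAE = "16485372/7235017" and lBC = "10698780728207849/424649158167948966" and
          lBD = "-(347280816000000/3370231414031341)" and
          lBE = "-(12393571355563678/3370231414031341)" and
          lCD = "-(88285766274235755513/2866937801692360998938)" and
          lCE = "5540678253178755498/204781271549454357067" and
          lDE = "-(59267954338801961931766/10096100380559523846199085)"]; simp add: coeff_defs power2_eq_square)
  next
    case 7
    then show ?thesis
      by (simp add: lower_form_def step_form_eq)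
        (rule qform5_nonneg_of_LDL[where
          dA = "180586939/220500000" and dB = "459769162449818401/566320640704000000" and
          dC = "3258468447573515067077/315401645440575423086000000" and
          dD = "4342341883246969581584377/417083961289409928585856000000" and
          dE = "3272578971164112186094663959/2171170941623484790792188500000" and
          lAB = "-(30408201/722347756)" and lAC = "107960337/5778782048" and lAD = "0" and
          lAE = "330285186/180586939" and lBC = "62314571832015463/3678153299598547208" and
          lBD = "-(39819420049500000/459769162449818401)" and
          lBE = "-(1377233237942329544/459769162449818401)" and
          lCD = "557547952068216977217/26067747580588120536616" and
          lCE = "-(116170761266459073090/3258468447573515067077)" and
          lDE = "-(115595355976996709683600/4342341883246969581584377)"]; simp add: coeff_defs power2_eq_square)
  next
    case 8
    then show ?thesis
      by (simp add: lower_form_def step_form_eq)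
        (rule qform5_nonneg_of_LDL[where
          dA = "40471101/49000000" and dB = "172767317336432441/209802187584000000" and
          dC = "435942929718885313054080703/1791251546144131548288000000" and
          dD = "8051021879215204698313470477149/114408862475424261557912939695320" and
          dE = "3487960068332678725215643224418811/201275546980380117457836761928725" and
          lAB = "-(125253065/2913919272)" and lAC = "3120897661/209802187584" and
          lAD = "0" and lAE = "67684435/40471101" and
          lBC = "146946416521540283/12439246848223135752" and
          lBD = "-(12950752320000000/172767317336432441)" and
          lBE = "-(423882400513684248/172767317336432441)" and
          lCD = "11755713321723222640000000/3923486367469967817486726327" and
          lCE = "508277089291584742041960000/435942929718885313054080703" and
          lDE = "-(17424472746894017899394123020800/8051021879215204698313470477149)"]; simp add: coeff_defs power2_eq_square)
  qed
qed

lemma coeff_signs: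
  fixes k :: real
  assumes "3 \<le> k"
  shows "coeff_a_c k \<le> 0" "0 \<le> coeff_a1_c k" "0 \<le> coeff_a_a1 k" "0 \<le> coeff_a2_c k"
    "0 < weight_c k" "weight_a k < 0"
proof -
  have "1 + 2*k - k^2 = 2 - (k - 1)^2" "k^2 - k - 1 = (k - 1)^2 + (k - 2)"
    by (simp_all add: power2_eq_square algebra_simps)
  moreover have "4 \<le> (k - 1)^2"
    using power_mono[of 2 "k - 1" 2] assms by simp
  ultimately show "coeff_a_c k \<le> 0" "0 \<le> coeff_a1_c k"
    unfolding coeff_a_c_def coeff_a1_c_def using assms
    by (auto intro!: divide_nonpos_pos divide_nonneg_pos)
  have "1 / (k + 1)^2 < 1 / k^2"
    using assms by (intro divide_strict_left_mono power_strict_mono) auto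
  then show "weight_a k < 0"
    unfolding weight_a_def by simp
  show "0 \<le> coeff_a_a1 k" "0 \<le> coeff_a2_c k" "0 < weight_c k"
    unfolding coeff_defs using assms by simp_all
qed

text \<open>The row conditions of \<open>qform5_nonneg_of_diag_dominant\<close> with \<open>s = 1/4\<close> for the
  matrix of \<open>step_form_eq\<close> when \<open>k \<ge> 9\<close>, signs already resolved by \<open>coeff_signs\<close>.\<close>

lemma diag_dominance_rows:
  fixes k :: real
  assumes k: "9 \<le> k"
  shows "- coeff_a_c k + coeff_a_a1 k + 1/4 \<le> coeff_a_a k - 2/(k - 1)"
    and "- coeff_a_c k + (coeff_a1_c k - (15*k + 40) * weight_c k * weight_a k) + coeff_a2_c k
        + (15*k + 40) * weight_c k / 4 \<le> coeff_c_c k - (15*k + 40) * (weight_c k)^2"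
    and "coeff_a_a1 k + (coeff_a1_c k - (15*k + 40) * weight_c k * weight_a k)
        + (15*k + 40) * (- weight_a k) / 4 \<le> 2/k - 3/(5*(k - 1)) - (15*k + 40) * (weight_a k)^2"
    and "coeff_a2_c k \<le> 3/(5*k)"
    and "1 + (15*k + 40) * weight_c k + (15*k + 40) * (- weight_a k) \<le> 15/4"
proof -
  have nz: "k \<noteq> 0" "k + 1 \<noteq> 0" "k - 1 \<noteq> 0"
    using k by auto
  show "- coeff_a_c k + coeff_a_a1 k + 1/4 \<le> coeff_a_a k - 2/(k - 1)"
    by (rule le_of_poly_certificate[where t = "k - 9" and D = "k^2 * (k + 1)^2 * (k - 1)^2"
          and p = "[:149532, 598156/5, 964699/25, 162068/25, 60167/100, 734/25, 59/100:]"])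
      (use nz in \<open>simp add: coeff_defs divide_simps; simp add: algebra_simps eval_nat_numeral\<close>,
       use k in \<open>simp_all add: coeff_pCons split: nat.split\<close>)
  show "- coeff_a_c k + (coeff_a1_c k - (15*k + 40) * weight_c k * weight_a k) + coeff_a2_c k
        + (15*k + 40) * weight_c k / 4 \<le> coeff_c_c k - (15*k + 40) * (weight_c k)^2"
    by (rule le_of_poly_certificate[where t = "k - 9" and D = "k^4 * (k + 1)^4"
          and p = "[:15823800, 18424490, 17090571/2, 42939837/20, 8144496/25, 1544677/50,
                    89967/50, 5909/100, 21/25:]"])
      (use nz in \<open>simp add: coeff_defs divide_simps; simp add: algebra_simps eval_nat_numeral\<close>,
       use k in \<open>simp_all add: coeff_pCons split: nat.split\<close>)
  show "coeff_a_a1 k + (coeff_a1_c k - (15*k + 40) * weight_c k * weight_a k)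
        + (15*k + 40) * (- weight_a k) / 4 \<le> 2/k - 3/(5*(k - 1)) - (15*k + 40) * (weight_a k)^2"
    by (rule le_of_poly_certificate[where t = "k - 9" and D = "k^4 * (k + 1)^4 * (k - 1)"
          and p = "[:12960400, 19787440, 10492228, 11484721/4, 9273073/20, 923763/20,
                    56063/20, 477/5, 7/5:]"])
      (use nz in \<open>simp add: coeff_defs divide_simps; simp add: algebra_simps eval_nat_numeral\<close>,
       use k in \<open>simp_all add: coeff_pCons split: nat.split\<close>)
  show "coeff_a2_c k \<le> 3/(5*k)"
    by (rule le_of_poly_certificate[where t = "k - 9" and D = "k * (k + 1)^2"
          and p = "[:21/2, 2, 1/10:]"])
      (use nz in \<open>simp add: coeff_defs divide_simps; simp add: algebra_simps eval_nat_numeral\<close>,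
       use k in \<open>simp_all add: coeff_pCons split: nat.split\<close>)
  show "1 + (15*k + 40) * weight_c k + (15*k + 40) * (- weight_a k) \<le> 15/4"
    by (rule le_of_poly_certificate[where t = "k - 9" and D = "k^2 * (k + 1)^2"
          and p = "[:3200, 4095, 3991/4, 179/2, 11/4:]"])
      (use nz in \<open>simp add: coeff_defs divide_simps; simp add: algebra_simps eval_nat_numeral\<close>,
       use k in \<open>simp_all add: coeff_pCons split: nat.split\<close>)
qed

lemma lower_form_step_large:
  assumes "9 \<le> n"
  shows "0 \<le> summand_form_at (real n) a0 c0 a1 a2 t
    + lower_form (n - 1) a0 a1 (t + weight_c (real n) * c0 + weight_a (real n) * a1)
    - lower_form n a1 a2 t"
proof -
  define k where "k = real n"
  have k: "9 \<le> k"
    using assms by (simp add: k_def)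
  have forms: "lower_form (n - 1) = qform3 (-2/(k - 1)) (-3/(5*(k - 1))) (-(15*k + 40)) 0 0 0"
    "lower_form n = qform3 (-2/k) (-3/(5*k)) (-(15*k + 55)) 0 0 0"
    using assms lower_form_large[of "n - 1"] lower_form_large[of n]
    by (simp_all add: k_def of_nat_diff algebra_simps)
  have signs: "coeff_a_c k \<le> 0" "0 \<le> coeff_a1_c k" "0 \<le> coeff_a_a1 k" "0 \<le> coeff_a2_c k"
      "0 < weight_c k" "weight_a k < 0"
    using coeff_signs k by simp_all
  have "0 \<le> (15*k + 40) * weight_c k * (- weight_a k)"
    using signs k by (intro mult_nonneg_nonneg) auto
  then have "0 \<le> coeff_a1_c k + (- (15 * k) - 40) * weight_c k * weight_a k"
    using signs by (simp add: algebra_simps)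
  moreover have "(- (15 * k) - 40) * weight_c k \<le> 0" "0 \<le> (- (15 * k) - 40) * weight_a k"
    using signs k by (simp_all add: mult_nonpos_nonneg mult_nonpos_nonpos)
  \<comment> \<open>stated in the simp normal form of the matrix entries, so that they can be used to rewrite\<close>
  ultimately have abs_eqs:
      "\<bar>coeff_a1_c k + (- (15 * k) - 40) * weight_c k * weight_a k\<bar>
        = coeff_a1_c k - (15 * k + 40) * weight_c k * weight_a k"
      "\<bar>(- (15 * k) - 40) * weight_c k\<bar> = (15 * k + 40) * weight_c k"
      "\<bar>(- (15 * k) - 40) * weight_a k\<bar> = (15 * k + 40) * (- weight_a k)"
    by (simp_all only: abs_of_nonneg abs_of_nonpos) (simp_all add: algebra_simps)
  show ?thesis
    unfolding k_def[symmetric] forms step_form_eq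
    by (rule qform5_nonneg_of_diag_dominant[where s = "1/4"];
        simp add: abs_eqs signs abs_of_nonneg abs_of_nonpos;
        use diag_dominance_rows[OF k] in \<open>simp add: algebra_simps add_divide_distrib diff_divide_distrib\<close>)
qed

lemma lower_form_step:
  assumes "1 \<le> n"
  shows "0 \<le> summand_form_at (real n) a0 c0 a1 a2 t
    + lower_form (n - 1) a0 a1 (t + weight_c (real n) * c0 + weight_a (real n) * a1)
    - lower_form n a1 a2 t"
  using assms lower_form_step_small lower_form_step_large by (cases "n \<le> 8") simp_all

lemma
  fixes c :: "nat \<Rightarrow> real"
  assumes "\<forall>n\<ge>1. \<bar>c n\<bar> \<le> B"
  shows summable_tailC_terms: "summable (\<lambda>i. c (i + k + 1) / (real (i + k + 1) * (real (i + k + 1) + 1)))"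
    and abs_tailC_le: "\<bar>tailC c k\<bar> \<le> B / real (k + 1)"
proof -
  have dominated: "\<bar>c (i + k + 1) / (real (i + k + 1) * (real (i + k + 1) + 1))\<bar>
      \<le> B * (1 / real (i + k + 1) ^ 1 - 1 / real (i + k + 2) ^ 1)" for i
  proof -
    let ?x = "real (i + k + 1)"
    have x: "0 < ?x" "real (i + k + 2) = ?x + 1"
      by simp_all
    have "\<bar>c (i + k + 1) / (?x * (?x + 1))\<bar> = \<bar>c (i + k + 1)\<bar> / (?x * (?x + 1))"
      using x(1) by (simp add: abs_mult)
    also have "\<dots> \<le> B / (?x * (?x + 1))"
      using assms x(1) by (intro divide_right_mono) auto
    also have "\<dots> = B * (1 / ?x ^ 1 - 1 / (?x + 1) ^ 1)"
      using x(1) by (simp add: field_simps)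
    finally show ?thesis
      unfolding x(2) .
  qed
  have "(\<lambda>i. B * (1 / real (i + k + 1) ^ 1 - 1 / real (i + k + 2) ^ 1))
      sums (B * (1 / real (k + 1) ^ 1))"
    by (intro sums_mult telescoping_inverse_power_sums) simp
  from summable_and_abs_suminf_le_of_dominated[OF dominated this]
  show "summable (\<lambda>i. c (i + k + 1) / (real (i + k + 1) * (real (i + k + 1) + 1)))"
    and "\<bar>tailC c k\<bar> \<le> B / real (k + 1)"
    unfolding tailC_def by simp_all
qed

lemma
  fixes a :: "nat \<Rightarrow> real"
  assumes "\<forall>n\<ge>1. \<bar>a n\<bar> \<le> B"
  shows summable_tailA_terms:
      "summable (\<lambda>i. a (i + k + 2) * (1 / (real (i + k + 2))^2 - 1 / (real (i + k + 2) - 1)^2))"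
    and abs_tailA_le: "\<bar>tailA a k\<bar> \<le> B / real (k + 1)^2"
proof -
  have dominated: "\<bar>a (i + k + 2) * (1 / (real (i + k + 2))^2 - 1 / (real (i + k + 2) - 1)^2)\<bar>
      \<le> B * (1 / real (i + k + 1)^2 - 1 / real (i + k + 2)^2)" for i
  proof -
    let ?x = "real (i + k + 1)"
    have x: "0 < ?x" "real (i + k + 2) = ?x + 1"
      by simp_all
    have le: "1 / (?x + 1)^2 \<le> 1 / ?x^2"
      using x(1) by (intro divide_left_mono power_mono) auto
    have "\<bar>a (i + k + 2) * (1 / (?x + 1)^2 - 1 / (?x + 1 - 1)^2)\<bar>
        = \<bar>a (i + k + 2)\<bar> * (1 / ?x^2 - 1 / (?x + 1)^2)"
      using le by (simp add: abs_mult)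
    also have "\<dots> \<le> B * (1 / ?x^2 - 1 / (?x + 1)^2)"
      using assms le by (intro mult_right_mono) auto
    finally show ?thesis
      unfolding x(2) .
  qed
  have "(\<lambda>i. B * (1 / real (i + k + 1)^2 - 1 / real (i + k + 2)^2)) sums (B * (1 / real (k + 1)^2))"
    by (intro sums_mult telescoping_inverse_power_sums) simp
  from summable_and_abs_suminf_le_of_dominated[OF dominated this]
  show "summable (\<lambda>i. a (i + k + 2) * (1 / (real (i + k + 2))^2 - 1 / (real (i + k + 2) - 1)^2))"
    and "\<bar>tailA a k\<bar> \<le> B / real (k + 1)^2"
    unfolding tailA_def by simp_all
qed

definition tail :: "(nat \<Rightarrow> real) \<Rightarrow> (nat \<Rightarrow> real) \<Rightarrow> nat \<Rightarrow> real" where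
  "tail a c k = tailA a k + tailC c k"

lemma Fterm_eq_summand_form:
  "Fterm a c k = summand_form_at (real k) (a k) (c k) (a (k + 1)) (a (k + 2)) (tail a c k)"
  unfolding Fterm_def summand_form_def tail_def coeff_defs by (simp add: algebra_simps)

lemma abs_tail_le:
  assumes "\<forall>n\<ge>1. \<bar>a n\<bar> \<le> B" "\<forall>n\<ge>1. \<bar>c n\<bar> \<le> B"
  shows "\<bar>tail a c k\<bar> \<le> 2 * B / real (k + 1)"
proof -
  have "0 \<le> B"
    using assms(1) by (meson abs_ge_zero order.trans order_refl)
  then have "B / real (k + 1)^2 \<le> B / real (k + 1)"
    by (intro divide_left_mono) (auto simp: power2_eq_square)
  then show ?thesis
    using abs_tailA_le[OF assms(1), of k] abs_tailC_le[OF assms(2), of k]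
    unfolding tail_def by (simp add: abs_le_iff)
qed

lemma tail_Suc:
  assumes "\<forall>n\<ge>1. \<bar>a n\<bar> \<le> B" "\<forall>n\<ge>1. \<bar>c n\<bar> \<le> B"
  shows "tail a c (Suc k) + weight_c (real (Suc k)) * c (Suc k) + weight_a (real (Suc k)) * a (Suc k + 1)
    = tail a c k"
proof -
  have "tailA a (Suc k) = tailA a k - a (k + 2) * (1 / real (k + 2)^2 - 1 / (real (k + 2) - 1)^2)"
    using suminf_split_head[OF summable_tailA_terms[OF assms(1), of k]]
    unfolding tailA_def by (simp add: algebra_simps)
  moreover have "tailC c (Suc k) = tailC c k - c (k + 1) / (real (k + 1) * (real (k + 1) + 1))"
    using suminf_split_head[OF summable_tailC_terms[OF assms(2), of k]]
    unfolding tailC_def by (simp add: algebra_simps)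
  ultimately show ?thesis
    unfolding tail_def coeff_defs by (simp add: algebra_simps)
qed

lemma lower_form_le_partial_sum:
  assumes "\<forall>n\<ge>1. \<bar>a n\<bar> \<le> B" "\<forall>n\<ge>1. \<bar>c n\<bar> \<le> B"
  shows "lower_form N (a (N + 1)) (a (N + 2)) (tail a c N) \<le> (\<Sum>k<N. Fterm a c (k + 1))"
proof (induction N)
  case 0
  show ?case
    by (simp add: lower_form_def qform3_def)
next
  case (Suc N)
  have "0 \<le> Fterm a c (Suc N) + lower_form N (a (Suc N)) (a (Suc N + 1)) (tail a c N)
      - lower_form (Suc N) (a (Suc N + 1)) (a (Suc N + 2)) (tail a c (Suc N))"
    using lower_form_step[of "Suc N" "a (Suc N)" "c (Suc N)" "a (Suc N + 1)" "a (Suc N + 2)"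
        "tail a c (Suc N)"]
    unfolding tail_Suc[OF assms] diff_Suc_1 Fterm_eq_summand_form[of a c "Suc N", symmetric] by simp
  with Suc.IH show ?case
    by simp
qed

lemma bounded_of_summable_squares:
  fixes a c :: "nat \<Rightarrow> real"
  assumes "summable (\<lambda>k. (a (k + 1))^2 + (c (k + 1))^2)"
  obtains B where "\<forall>n\<ge>1. \<bar>a n\<bar> \<le> B" "\<forall>n\<ge>1. \<bar>c n\<bar> \<le> B"
proof -
  let ?S = "\<Sum>k. (a (k + 1))^2 + (c (k + 1))^2"
  have "\<bar>a n\<bar> \<le> sqrt ?S \<and> \<bar>c n\<bar> \<le> sqrt ?S" if "1 \<le> n" for n
  proof -
    have "(\<Sum>k\<in>{n - 1}. (a (k + 1))^2 + (c (k + 1))^2) \<le> ?S"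
      by (rule sum_le_suminf[OF assms]) auto
    then have "(a n)^2 + (c n)^2 \<le> ?S"
      using that by simp
    then have "\<bar>a n\<bar>^2 \<le> ?S" "\<bar>c n\<bar>^2 \<le> ?S"
      using zero_le_power2[of "a n"] zero_le_power2[of "c n"] unfolding power2_abs by linarith+
    then show ?thesis
      by (simp add: real_le_rsqrt)
  qed
  then show ?thesis
    using that[of "sqrt ?S"] by blast
qed

lemma eventually_coeff_abs_sum_less:
  "eventually (\<lambda>n. coeff_abs_sum (real (n + 1)) < 3) sequentially"
proof -
  have "(\<lambda>n. coeff_abs_sum (real (n + 1))) \<longlonglongrightarrow> 1 + 0.84 + 0.84"
    unfolding coeff_abs_sum_def coeff_defs by real_asymp
  then show ?thesis
    by (rule order_tendstoD(2)) simp
qed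

lemma summable_tail_squares:
  assumes "\<forall>n\<ge>1. \<bar>a n\<bar> \<le> B" "\<forall>n\<ge>1. \<bar>c n\<bar> \<le> B"
  shows "summable (\<lambda>k. (tail a c (k + 1))^2)"
proof (rule summable_comparison_test)
  show "\<exists>N. \<forall>k\<ge>N. norm ((tail a c (k + 1))^2) \<le> (2 * B)^2 * inverse (real (k + 2) ^ 2)"
  proof (intro exI allI impI)
    fix k :: nat
    have "\<bar>tail a c (k + 1)\<bar>^2 \<le> (2 * B / real (k + 2))^2"
      using abs_tail_le[OF assms, of "k + 1"] by (intro power_mono) auto
    then show "norm ((tail a c (k + 1))^2) \<le> (2 * B)^2 * inverse (real (k + 2) ^ 2)"
      by (simp add: power_divide field_simps)
  qed
  show "summable (\<lambda>k. (2 * B)^2 * inverse (real (k + 2) ^ 2))"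
    using summable_iff_shift[of "\<lambda>n. inverse (real n ^ 2)" 2] inverse_power_summable[of 2]
    by (intro summable_mult) simp
qed

lemma summable_Fterm:
  assumes squares: "summable (\<lambda>k. (a (k + 1))^2 + (c (k + 1))^2)"
    and bounds: "\<forall>n\<ge>1. \<bar>a n\<bar> \<le> B" "\<forall>n\<ge>1. \<bar>c n\<bar> \<le> B"
  shows "summable (\<lambda>k. Fterm a c (k + 1))"
proof -
  define Q where "Q k = (a (k + 1))^2 + (c (k + 1))^2 + (a (k + 1 + 1))^2 + (a (k + 1 + 2))^2
    + (tail a c (k + 1))^2" for k
  have sa: "summable (\<lambda>k. (a (k + 1))^2)" and sc: "summable (\<lambda>k. (c (k + 1))^2)"
    by (rule summable_comparison_test'[OF squares]; simp)+
  have "summable Q"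
    unfolding Q_def
    by (intro summable_add sa sc summable_tail_squares[OF bounds]
        sa[THEN summable_ignore_initial_segment[where k = 1]])
      (use sa[THEN summable_ignore_initial_segment[where k = 2]] in simp)
  have "norm (Fterm a c (k + 1)) \<le> 3 * Q k" if "coeff_abs_sum (real (k + 1)) < 3" for k
  proof -
    have "0 \<le> Q k"
      unfolding Q_def by simp
    have "\<bar>Fterm a c (k + 1)\<bar> \<le> coeff_abs_sum (real (k + 1)) * Q k"
      unfolding Fterm_eq_summand_form Q_def coeff_abs_sum_def by (rule abs_summand_form_le)
    also have "\<dots> \<le> 3 * Q k"
      using that \<open>0 \<le> Q k\<close> by (intro mult_right_mono) auto
    finally show ?thesis
      by simp
  qed
  then have "eventually (\<lambda>k. norm (Fterm a c (k + 1)) \<le> 3 * Q k) sequentially"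
    using eventually_coeff_abs_sum_less by (rule eventually_mono[rotated])
  moreover have "summable (\<lambda>k. 3 * Q k)"
    using \<open>summable Q\<close> by (rule summable_mult)
  ultimately show ?thesis
    by (rule summable_comparison_test_ev)
qed

lemma abs_lower_form_tail_le:
  assumes bounds: "\<forall>n\<ge>1. \<bar>a n\<bar> \<le> B" "\<forall>n\<ge>1. \<bar>c n\<bar> \<le> B"
    and N: "8 \<le> N"
  shows "\<bar>lower_form N (a (N + 1)) (a (N + 2)) (tail a c N)\<bar>
    \<le> 2 * (a (N + 1))^2 + (a (N + 2))^2 + (2 * B)^2 * ((15 * real N + 55) / real (N + 1)^2)"
proof -
  define P where "P = 2 / real N * (a (N + 1))^2 + 3 / (5 * real N) * (a (N + 2))^2
    + (15 * real N + 55) * (tail a c N)^2"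
  have "(tail a c N)^2 \<le> (2 * B / real (N + 1))^2"
    using abs_tail_le[OF bounds, of N] by (metis abs_ge_zero power2_abs power_mono)
  then have "(15 * real N + 55) * (tail a c N)^2 \<le> (15 * real N + 55) * (2 * B / real (N + 1))^2"
    by (rule mult_left_mono) simp
  also have "\<dots> = (2 * B)^2 * ((15 * real N + 55) / real (N + 1)^2)"
    by (simp add: power_divide)
  finally have "(15 * real N + 55) * (tail a c N)^2 \<le> (2 * B)^2 * ((15 * real N + 55) / real (N + 1)^2)" .
  moreover have "2 / real N * (a (N + 1))^2 \<le> 2 * (a (N + 1))^2"
    by (rule mult_right_mono) (use N in \<open>simp_all add: field_simps\<close>)
  moreover have "3 / (5 * real N) * (a (N + 2))^2 \<le> 1 * (a (N + 2))^2"
    by (rule mult_right_mono) (use N in \<open>simp_all add: field_simps\<close>)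
  ultimately have "P \<le> 2 * (a (N + 1))^2 + (a (N + 2))^2 + (2 * B)^2 * ((15 * real N + 55) / real (N + 1)^2)"
    unfolding P_def by linarith
  moreover have "lower_form N (a (N + 1)) (a (N + 2)) (tail a c N) = - P"
    unfolding P_def lower_form_large[OF N] qform3_def by (simp add: algebra_simps)
  moreover have "0 \<le> P"
    unfolding P_def by (intro add_nonneg_nonneg mult_nonneg_nonneg) simp_all
  ultimately show ?thesis
    by simp
qed

lemma lower_form_tail_tendsto_zero:
  assumes squares: "summable (\<lambda>k. (a (k + 1))^2 + (c (k + 1))^2)"
    and bounds: "\<forall>n\<ge>1. \<bar>a n\<bar> \<le> B" "\<forall>n\<ge>1. \<bar>c n\<bar> \<le> B"
  shows "(\<lambda>N. lower_form N (a (N + 1)) (a (N + 2)) (tail a c N)) \<longlonglongrightarrow> 0"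
proof (rule Lim_null_comparison)
  have "(\<lambda>N. (a (N + 1))^2) \<longlonglongrightarrow> 0"
    by (rule summable_LIMSEQ_zero, rule summable_comparison_test[OF _ squares]) simp
  moreover from LIMSEQ_Suc[OF this] have "(\<lambda>N. (a (N + 2))^2) \<longlonglongrightarrow> 0"
    by (simp add: numeral_2_eq_2)
  moreover have "(\<lambda>N. (15 * real N + 55) / real (N + 1)^2) \<longlonglongrightarrow> 0"
    by real_asymp
  ultimately have "(\<lambda>N. 2 * (a (N + 1))^2 + (a (N + 2))^2
      + (2 * B)^2 * ((15 * real N + 55) / real (N + 1)^2)) \<longlonglongrightarrow> 2 * 0 + 0 + (2 * B)^2 * 0"
    by (intro tendsto_intros)
  then show "(\<lambda>N. 2 * (a (N + 1))^2 + (a (N + 2))^2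
      + (2 * B)^2 * ((15 * real N + 55) / real (N + 1)^2)) \<longlonglongrightarrow> 0"
    by simp
  show "eventually (\<lambda>N. norm (lower_form N (a (N + 1)) (a (N + 2)) (tail a c N)) \<le> 2 * (a (N + 1))^2
      + (a (N + 2))^2 + (2 * B)^2 * ((15 * real N + 55) / real (N + 1)^2)) sequentially"
    using eventually_ge_at_top[of 8]
    by (rule eventually_mono) (unfold real_norm_def, erule abs_lower_form_tail_le[OF bounds])
qed

theorem mainTheorem15:
  fixes a c :: "nat \<Rightarrow> real"
  assumes "summable (\<lambda>k. (a (k + 1))^2 + (c (k + 1))^2)"
  shows "summable (\<lambda>k. Fterm a c (k + 1)) \<and> 0 \<le> (\<Sum>k. Fterm a c (k + 1))"
proof
  obtain B where bounds: "\<forall>n\<ge>1. \<bar>a n\<bar> \<le> B" "\<forall>n\<ge>1. \<bar>c n\<bar> \<le> B"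
    using bounded_of_summable_squares[OF assms] .
  show summable: "summable (\<lambda>k. Fterm a c (k + 1))"
    using summable_Fterm[OF assms bounds] .
  show "0 \<le> (\<Sum>k. Fterm a c (k + 1))"
  proof (rule LIMSEQ_le)
    show "(\<lambda>N. lower_form N (a (N + 1)) (a (N + 2)) (tail a c N)) \<longlonglongrightarrow> 0"
      using lower_form_tail_tendsto_zero[OF assms bounds] .
    show "(\<lambda>N. \<Sum>k<N. Fterm a c (k + 1)) \<longlonglongrightarrow> (\<Sum>k. Fterm a c (k + 1))"
      using summable by (rule summable_LIMSEQ)
    show "\<exists>N. \<forall>n\<ge>N. lower_form n (a (n + 1)) (a (n + 2)) (tail a c n) \<le> (\<Sum>k<n. Fterm a c (k + 1))"
      using lower_form_le_partial_sum[OF bounds] by blast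
  qed
qed

end
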